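(* Let $X$ be a smooth projective curve of genus 2, let $S$ be the moduli variety of S-equivalence classes of semi-stable rank-2 vector bundles of degree 0 on $X$ with trivial determinant, and let $K\subset S$ be the set of non-stable classes, i.e. the classes of $j\oplus j^{-1}$ with $j$ a line bundle of degree 0 on $X$ (so $K$ is the Kummer surface of the Jacobian of $X$). For $a=j\oplus j^{-1}$, $b=l\oplus l^{-1}$ in $K$ define $$a\star_s b=\big(j\otimes l\oplus j^{-1}\otimes l^{-1},\ j\otimes l^{-1}\oplus j^{-1}\otimes l\big).$$ Then $\star_s\colon K\times K\to(K)^2$ defines a two-valued group structure on $K$.
   Context: A holomorphic bundle $W$ is semi-stable if $\deg V/\mathrm{rank}\,V\le \deg W/\mathrm{rank}\,W$ for every proper subbundle $V$ (stable with strict inequality); two semi-stable bundles are S-equivalent if the graded bundles associated with their Jordan–Hölder filtrations are isomorphic. $(K)^2$ is the symmetric square. A two-valued group structure on a set $Y$ is a map $\ast\colon Y\times Y\to(Y)^2$ that is associative (the multisets $[x\ast(y\ast z)_1,x\ast(y\ast z)_2]$ and $[(x\ast y)_1\ast z,(x\ast y)_2\ast z]$ coincide), with a unit $e$ satisfying $e\ast x=x\ast e=[x,x]$ and a map $\mathrm{inv}$ with $e\in\mathrm{inv}(x)\ast x$, $e\in x\ast\mathrm{inv}(x)$. *)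

theory Defs
  imports "HOL-Library.Multiset"
begin

text \<open>Two-valued group structure on a set Y: the product lands in the symmetric
square (Y)^2, modelled as 2-element multisets over Y.\<close>
definition two_valued_group ::
  "'y set \<Rightarrow> ('y \<Rightarrow> 'y \<Rightarrow> 'y multiset) \<Rightarrow> 'y \<Rightarrow> ('y \<Rightarrow> 'y) \<Rightarrow> bool" where
  "two_valued_group Y mul e iv \<longleftrightarrow>
     (\<forall>x\<in>Y. \<forall>y\<in>Y. size (mul x y) = 2 \<and> set_mset (mul x y) \<subseteq> Y) \<and>
     (\<forall>x\<in>Y. \<forall>y\<in>Y. \<forall>z\<in>Y.
        sum_mset (image_mset (mul x) (mul y z)) =
        sum_mset (image_mset (\<lambda>w. mul w z) (mul x y))) \<and>
     e \<in> Y \<and>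
     (\<forall>x\<in>Y. mul e x = {#x, x#} \<and> mul x e = {#x, x#}) \<and>
     (\<forall>x\<in>Y. iv x \<in> Y \<and> e \<in># mul (iv x) x \<and> e \<in># mul x (iv x))"

text \<open>Pic^0(X) is modelled by an (additively written) abelian group 'a:
tensor product = +, dual line bundle = uminus.  The S-equivalence class of
j \<oplus> j^{-1} is identified with the unordered pair {j, j^{-1}}.\<close>
definition cls :: "'a::ab_group_add \<Rightarrow> 'a set" where
  "cls j = {j, - j}"

definition Kset :: "'a::ab_group_add set set" where
  "Kset = range cls"

text \<open>The operation, defined via chosen representatives; independence of the
choice is part of the theorem.\<close>
definition starK :: "'a::ab_group_add set \<Rightarrow> 'a set \<Rightarrow> 'a set multiset" where
  "starK a b = (let j = (SOME j. a = cls j); l = (SOME l. b = cls l)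
               in {# cls (j + l), cls (j - l) #})"

end

theory Submission
  imports Defs
begin

text \<open>The product of the classes of \<open>j\<close> and \<open>l\<close> does not depend on the representatives:
  replacing \<open>l\<close> by \<open>-l\<close> swaps the two factors, replacing \<open>j\<close> by \<open>-j\<close> negates both. The
  axioms then reduce to identities in the abelian group: both bracketings of a triple
  product give the classes of the four sums \<open>a \<plusminus> b \<plusminus> c\<close>, the class of \<open>0\<close> is the unit,
  and every class is its own inverse because \<open>a - a = 0\<close>.\<close>

lemma cls_eq_iff: "cls j = cls k \<longleftrightarrow> k = j \<or> k = - j"
  unfolding cls_def by (auto simp: doubleton_eq_iff)

lemma cls_uminus [simp]: "cls (- j) = cls j"
  unfolding cls_def by auto

lemma mem_Kset_iff: "x \<in> Kset \<longleftrightarrow> (\<exists>a. x = cls a)"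
  unfolding Kset_def by auto

lemma cls_pair_product_independent:
  assumes "cls j' = cls j" and "cls l' = cls l"
  shows "{# cls (j' + l'), cls (j' - l') #} = {# cls (j + l), cls (j - l) #}"
proof -
  have change_l: "{# cls (k + l'), cls (k - l') #} = {# cls (k + l), cls (k - l) #}" for k
    using \<open>cls l' = cls l\<close> unfolding cls_eq_iff
    by (elim disjE) (simp_all add: add_mset_commute)
  have "cls (- j + l) = cls (j - l)"
    by (metis cls_uminus minus_diff_eq uminus_add_conv_diff)
  moreover have "cls (- j - l) = cls (j + l)"
    by (metis cls_uminus minus_add_distrib diff_conv_add_uminus)
  moreover have "j' = j \<or> j' = - j"
    using \<open>cls j' = cls j\<close> by (auto simp: cls_eq_iff)
  ultimately have change_j: "{# cls (j' + l), cls (j' - l) #} = {# cls (j + l), cls (j - l) #}"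
    by (auto simp only: add_mset_commute)
  show ?thesis
    using change_l change_j by simp
qed

lemma starK_cls: "starK (cls j) (cls l) = {# cls (j + l), cls (j - l) #}"
proof -
  have "cls (SOME j'. cls j = cls j') = cls j" "cls (SOME l'. cls l = cls l') = cls l"
    by (metis (mono_tags) someI_ex)+
  then show ?thesis
    unfolding starK_def Let_def by (rule cls_pair_product_independent)
qed

lemma starK_cls_assoc:
  "sum_mset (image_mset (starK (cls a)) (starK (cls b) (cls c))) =
   sum_mset (image_mset (\<lambda>w. starK w (cls c)) (starK (cls a) (cls b)))"
proof -
  have reassoc: "a - (b + c) = a - b - c" "a + (b - c) = a + b - c" "a - (b - c) = a - b + c"
    "a + (b + c) = a + b + c"
    by (simp_all add: algebra_simps)
  show ?thesis by (simp add: starK_cls reassoc add_mset_commute)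
qed

lemma starK_cls_zero:
  "starK (cls 0) (cls a) = {# cls a, cls a #}"
  "starK (cls a) (cls 0) = {# cls a, cls a #}"
  by (simp_all add: starK_cls)

lemma cls_zero_mem_starK_self: "cls 0 \<in># starK (cls a) (cls a)"
  by (simp add: starK_cls)

lemma two_valued_group_Kset:
  "two_valued_group (Kset :: 'a::ab_group_add set set) starK (cls 0) id"
  unfolding two_valued_group_def
proof (intro conjI ballI)
  fix x y z :: "'a set" assume "x \<in> Kset" "y \<in> Kset" "z \<in> Kset"
  then obtain a b c where "x = cls a" "y = cls b" "z = cls c"
    by (auto simp: mem_Kset_iff)
  then show "sum_mset (image_mset (starK x) (starK y z)) =
      sum_mset (image_mset (\<lambda>w. starK w z) (starK x y))"
    by (simp only: starK_cls_assoc)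
next
  fix x y :: "'a set" assume "x \<in> Kset" "y \<in> Kset"
  then obtain a b where "x = cls a" "y = cls b"
    by (auto simp: mem_Kset_iff)
  then show "size (starK x y) = 2" "set_mset (starK x y) \<subseteq> Kset"
    by (simp_all add: starK_cls Kset_def)
next
  fix x :: "'a set" assume "x \<in> Kset"
  then obtain a where "x = cls a"
    by (auto simp: mem_Kset_iff)
  then show "starK (cls 0) x = {#x, x#}" "starK x (cls 0) = {#x, x#}"
    "cls 0 \<in># starK (id x) x" "cls 0 \<in># starK x (id x)" "id x \<in> Kset"
    using \<open>x \<in> Kset\<close> by (simp_all add: starK_cls_zero cls_zero_mem_starK_self)
qed (simp add: Kset_def)

theorem mainTheorem5:
  shows "(\<forall>j l :: 'a::ab_group_add. starK (cls j) (cls l) = {# cls (j + l), cls (j - l) #}) \<and>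
         (\<exists>e iv. two_valued_group (Kset :: 'a set set) starK e iv)"
  by (metis starK_cls two_valued_group_Kset)

end
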